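(* Let $G=(V,E,w)$ be a connected weighted graph with nonnegative edge weights, and let $f_{MST}(G)$ denote the weight of a minimum spanning tree of $G$. For add/remove adjacency over edges (adding one edge $e\notin E$ with an arbitrary nonnegative weight), $$\mathrm{RS}_{f_{MST}}(G)=\max_{S\subset V:\ \exists u\in S,\,v\in V\setminus S,\ \{u,v\}\notin E} w_1(S),$$ where $w_1(S)$ is the minimum weight among edges of $E$ crossing the cut $(S,V\setminus S)$.
   Context: $\mathrm{RS}_{f_{MST}}(G)=\max|f_{MST}((V,E))-f_{MST}((V,E\cup\{e\}))|$, the maximum over $e\in\binom{V}{2}\setminus E$ and over admissible weights of $e$ (weights are nonnegative; in the paper's setting all weights lie in $[0,B]$). *)

theory Defs
  imports Complex_Main
begin

definition pairs :: "'a set \<Rightarrow> 'a set set" where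
  "pairs V = {e. e \<subseteq> V \<and> card e = 2}"

definition simple_graph :: "'a set \<Rightarrow> 'a set set \<Rightarrow> bool" where
  "simple_graph V E \<longleftrightarrow> finite V \<and> E \<subseteq> pairs V"

definition adj_rel :: "'a set set \<Rightarrow> ('a \<times> 'a) set" where
  "adj_rel F = {(a, b). {a, b} \<in> F \<and> a \<noteq> b}"

definition connected_on :: "'a set \<Rightarrow> 'a set set \<Rightarrow> bool" where
  "connected_on V F \<longleftrightarrow> (\<forall>u\<in>V. \<forall>v\<in>V. (u, v) \<in> (adj_rel F)\<^sup>*)"

definition acyclic_edges :: "'a set set \<Rightarrow> bool" where
  "acyclic_edges F \<longleftrightarrow>
     (\<forall>e\<in>F. \<forall>a b. e = {a, b} \<longrightarrow> a \<noteq> b \<longrightarrow> (a, b) \<notin> (adj_rel (F - {e}))\<^sup>*)"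

definition spanning_tree :: "'a set \<Rightarrow> 'a set set \<Rightarrow> 'a set set \<Rightarrow> bool" where
  "spanning_tree V E T \<longleftrightarrow> T \<subseteq> E \<and> connected_on V T \<and> acyclic_edges T"

definition f_MST :: "'a set \<Rightarrow> 'a set set \<Rightarrow> ('a set \<Rightarrow> real) \<Rightarrow> real" where
  "f_MST V E w = Min ((\<lambda>T. \<Sum>e\<in>T. w e) ` {T. spanning_tree V E T})"

definition RS_MST :: "'a set \<Rightarrow> 'a set set \<Rightarrow> ('a set \<Rightarrow> real) \<Rightarrow> real" where
  "RS_MST V E w = Sup {\<bar>f_MST V E w - f_MST V (insert e E) (w(e := x))\<bar> | e x.
                        e \<in> pairs V - E \<and> x \<ge> 0}"

definition w1 :: "'a set \<Rightarrow> 'a set set \<Rightarrow> ('a set \<Rightarrow> real) \<Rightarrow> 'a set \<Rightarrow> real" where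
  "w1 V E w S = Min (w ` {e \<in> E. \<exists>u\<in>S. \<exists>v\<in>V - S. e = {u, v}})"

end

theory Submission
  imports Defs
begin

(* Adding a non-edge e = {u,v} never increases the MST weight.  If it decreases it, e lies in
   the new minimum spanning tree T'; removing e from T' leaves the component S of u, with
   v outside S, and reconnecting through a cheapest edge of E across (S, V - S) shows that the
   decrease is at most w_1(S).  Conversely, for any cut S separating u from v with {u,v} not in E,
   the u-v connection in a minimum spanning tree T of E uses an edge g across the cut whose
   removal separates u from v; exchanging g for e of weight 0 saves w g >= w_1(S). *)

section \<open>Reachability along edge sets\<close>

lemma sym_adj_rel: "sym (adj_rel F)"
  by (auto simp: adj_rel_def sym_def insert_commute)

lemma adj_rel_rtrancl_sym: "(a, b) \<in> (adj_rel F)\<^sup>* \<Longrightarrow> (b, a) \<in> (adj_rel F)\<^sup>*"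
  using sym_rtrancl[OF sym_adj_rel] by (rule symD)

lemma adj_rel_mono: "F \<subseteq> G \<Longrightarrow> adj_rel F \<subseteq> adj_rel G"
  by (auto simp: adj_rel_def)

lemma adj_rel_rtrancl_mono: "F \<subseteq> G \<Longrightarrow> (a, b) \<in> (adj_rel F)\<^sup>* \<Longrightarrow> (a, b) \<in> (adj_rel G)\<^sup>*"
  using rtrancl_mono[OF adj_rel_mono] by blast

lemma rtrancl_leaves_set:
  assumes "(a, b) \<in> R\<^sup>*" "a \<in> S" "b \<notin> S"
  obtains c d where "(c, d) \<in> R" "c \<in> S" "d \<notin> S"
  using assms by (induction rule: rtrancl_induct) blast+

lemma adj_rel_rtrancl_Diff_edge:
  assumes "(a, b) \<in> (adj_rel F)\<^sup>*" and "(a, b) \<notin> (adj_rel (F - {{c, d}}))\<^sup>*"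
  shows "(a, c) \<in> (adj_rel (F - {{c, d}}))\<^sup>* \<and> (d, b) \<in> (adj_rel (F - {{c, d}}))\<^sup>* \<or>
         (a, d) \<in> (adj_rel (F - {{c, d}}))\<^sup>* \<and> (c, b) \<in> (adj_rel (F - {{c, d}}))\<^sup>*"
proof -
  define R where "R = adj_rel (F - {{c, d}})"
  have "(a, y) \<in> R\<^sup>* \<or> ((a, c) \<in> R\<^sup>* \<or> (a, d) \<in> R\<^sup>*) \<and> ((c, y) \<in> R\<^sup>* \<or> (d, y) \<in> R\<^sup>*)"
    if "(a, y) \<in> (adj_rel F)\<^sup>*" for y
    using that
  proof (induction rule: rtrancl_induct)
    case (step y z)
    show ?case
    proof (cases "{y, z} = {c, d}")
      case True
      then have "y \<in> {c, d}" "z \<in> {c, d}" by auto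
      with step.IH show ?thesis by auto
    next
      case False
      with step.hyps(2) have "(y, z) \<in> R" by (simp add: R_def adj_rel_def)
      with step.IH show ?thesis by (meson rtrancl.rtrancl_into_rtrancl)
    qed
  qed simp
  with assms show ?thesis unfolding R_def[symmetric] by (meson rtrancl_trans)
qed

lemma crossing_edge_replaceable:
  assumes "finite F" "(u, v) \<in> (adj_rel F)\<^sup>*" "u \<in> S" "v \<notin> S"
  shows "\<exists>c d. {c, d} \<in> F \<and> c \<in> S \<and> d \<notin> S \<and>
           (c, d) \<in> (adj_rel (insert {u, v} (F - {{c, d}})))\<^sup>*"
  using assms
proof (induction "card F" arbitrary: F rule: less_induct)
  case less
  obtain c d where cd: "(c, d) \<in> adj_rel F" "c \<in> S" "d \<notin> S"
    using less.prems(2-4) by (elim rtrancl_leaves_set)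
  then have cdF: "{c, d} \<in> F" by (simp add: adj_rel_def)
  (* Either u and v stay connected without {c, d}, and we recurse on the smaller edge set,
     or {c, d} separates them and the chord {u, v} bridges the two sides. *)
  show ?case
  proof (cases "(u, v) \<in> (adj_rel (F - {{c, d}}))\<^sup>*")
    case True
    have "card (F - {{c, d}}) < card F" using less.prems(1) cdF by (rule card_Diff1_less)
    then obtain c' d' where c'd': "{c', d'} \<in> F" "c' \<in> S" "d' \<notin> S"
      "(c', d') \<in> (adj_rel (insert {u, v} (F - {{c, d}} - {{c', d'}})))\<^sup>*"
      using less.hyps[OF _ _ True less.prems(3,4)] less.prems(1) by blast
    moreover have "insert {u, v} (F - {{c, d}} - {{c', d'}}) \<subseteq> insert {u, v} (F - {{c', d'}})"
      by blast
    ultimately show ?thesis by (blast dest: adj_rel_rtrancl_mono)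
  next
    case False
    define G where "G = insert {u, v} (F - {{c, d}})"
    have sub: "F - {{c, d}} \<subseteq> G" by (auto simp: G_def)
    have "u \<noteq> v" using less.prems(3,4) by blast
    then have uv: "(u, v) \<in> adj_rel G" "(v, u) \<in> adj_rel G"
      by (auto simp: G_def adj_rel_def insert_commute)
    from adj_rel_rtrancl_Diff_edge[OF less.prems(2) False]
    have "(c, d) \<in> (adj_rel G)\<^sup>*"
    proof (elim disjE conjE)
      assume "(u, c) \<in> (adj_rel (F - {{c, d}}))\<^sup>*" "(d, v) \<in> (adj_rel (F - {{c, d}}))\<^sup>*"
      then have "(c, u) \<in> (adj_rel G)\<^sup>*" "(v, d) \<in> (adj_rel G)\<^sup>*"
        by (metis adj_rel_rtrancl_sym adj_rel_rtrancl_mono[OF sub])+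
      with uv(1) show ?thesis by (metis rtrancl_trans r_into_rtrancl)
    next
      assume "(u, d) \<in> (adj_rel (F - {{c, d}}))\<^sup>*" "(c, v) \<in> (adj_rel (F - {{c, d}}))\<^sup>*"
      then have "(u, d) \<in> (adj_rel G)\<^sup>*" "(c, v) \<in> (adj_rel G)\<^sup>*"
        by (metis adj_rel_rtrancl_mono[OF sub])+
      with uv(2) show ?thesis by (metis rtrancl_trans r_into_rtrancl)
    qed
    with cdF cd(2,3) show ?thesis unfolding G_def by blast
  qed
qed

section \<open>Connectivity and minimum spanning trees\<close>

lemma simple_graph_finite_edges:
  assumes "simple_graph V E"
  shows "finite E"
proof (rule finite_subset)
  show "E \<subseteq> Pow V" using assms by (auto simp: simple_graph_def pairs_def)
  show "finite (Pow V)" using assms by (simp add: simple_graph_def)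
qed

lemma connected_on_mono: "connected_on V F \<Longrightarrow> F \<subseteq> G \<Longrightarrow> connected_on V G"
  unfolding connected_on_def by (metis adj_rel_rtrancl_mono)

lemma connected_on_exchange:
  assumes "connected_on V F" "F - {{a, b}} \<subseteq> G" "(a, b) \<in> (adj_rel G)\<^sup>*"
  shows "connected_on V G"
proof -
  have "adj_rel F \<subseteq> (adj_rel G)\<^sup>*"
  proof safe
    fix p q assume pq: "(p, q) \<in> adj_rel F"
    show "(p, q) \<in> (adj_rel G)\<^sup>*"
    proof (cases "{p, q} = {a, b}")
      case True
      then show ?thesis
        using assms(3) adj_rel_rtrancl_sym[OF assms(3)] by (auto simp: doubleton_eq_iff)
    next
      case False
      with pq assms(2) show ?thesis by (auto simp: adj_rel_def)
    qed
  qed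
  then have "(adj_rel F)\<^sup>* \<subseteq> (adj_rel G)\<^sup>*" by (rule rtrancl_subset_rtrancl)
  with assms(1) show ?thesis unfolding connected_on_def by blast
qed

lemma connected_on_has_acyclic_subset:
  "finite F \<Longrightarrow> connected_on V F \<Longrightarrow> \<exists>T\<subseteq>F. connected_on V T \<and> acyclic_edges T"
proof (induction "card F" arbitrary: F rule: less_induct)
  case less
  show ?case
  proof (cases "acyclic_edges F")
    case False
    then obtain a b where ab: "{a, b} \<in> F" "(a, b) \<in> (adj_rel (F - {{a, b}}))\<^sup>*"
      unfolding acyclic_edges_def by blast
    have "connected_on V (F - {{a, b}})"
      using connected_on_exchange[OF less.prems(2) subset_refl ab(2)] .
    moreover have "card (F - {{a, b}}) < card F" using less.prems(1) ab(1) by (rule card_Diff1_less)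
    ultimately obtain T where "T \<subseteq> F - {{a, b}}" "connected_on V T" "acyclic_edges T"
      using less.hyps less.prems(1) by blast
    then show ?thesis by blast
  qed (use less.prems in blast)
qed

lemma spanning_trees_finite: "finite E \<Longrightarrow> finite {T. spanning_tree V E T}"
  by (rule finite_subset[of _ "Pow E"]) (auto simp: spanning_tree_def)

lemma f_MST_attained:
  assumes "finite E" "connected_on V E"
  obtains T where "spanning_tree V E T" "f_MST V E w = sum w T"
proof -
  have "{T. spanning_tree V E T} \<noteq> {}"
    using connected_on_has_acyclic_subset[OF assms] by (auto simp: spanning_tree_def)
  then have "f_MST V E w \<in> sum w ` {T. spanning_tree V E T}"
    unfolding f_MST_def using spanning_trees_finite[OF assms(1)] by (intro Min_in) auto
  then show ?thesis using that by blast
qed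

lemma f_MST_le_connected:
  assumes "finite E" "\<forall>e\<in>E. 0 \<le> w e" "T \<subseteq> E" "connected_on V T"
  shows "f_MST V E w \<le> sum w T"
proof -
  have fin: "finite T" using assms(1,3) by (rule rev_finite_subset)
  obtain T0 where T0: "T0 \<subseteq> T" "connected_on V T0" "acyclic_edges T0"
    using connected_on_has_acyclic_subset[OF fin assms(4)] by blast
  then have "spanning_tree V E T0" using assms(3) by (auto simp: spanning_tree_def)
  then have "f_MST V E w \<le> sum w T0"
    unfolding f_MST_def using spanning_trees_finite[OF assms(1)] by (intro Min_le) auto
  also have "\<dots> \<le> sum w T" using T0(1) fin assms(2,3) by (intro sum_mono2) auto
  finally show ?thesis .
qed

lemma f_MST_le_exchange:
  assumes "finite E" "\<forall>e\<in>E. 0 \<le> w e" "connected_on V T"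
    and "insert f (T - {{a, b}}) \<subseteq> E" "(a, b) \<in> (adj_rel (insert f (T - {{a, b}})))\<^sup>*"
  shows "f_MST V E w \<le> sum w (T - {{a, b}}) + w f"
proof -
  have "f_MST V E w \<le> sum w (insert f (T - {{a, b}}))"
    using assms by (intro f_MST_le_connected connected_on_exchange[OF assms(3) _ assms(5)]) auto
  also have "\<dots> \<le> sum w (T - {{a, b}}) + w f"
    using assms(1,2,4) rev_finite_subset[OF assms(1,4)] by (auto simp: sum.insert_if)
  finally show ?thesis .
qed

lemma f_MST_insert_le:
  assumes "finite E" "connected_on V E" "\<forall>e\<in>E. 0 \<le> w e" "e \<notin> E" "0 \<le> x"
  shows "f_MST V (insert e E) (w(e := x)) \<le> f_MST V E w"
proof -
  obtain T where T: "spanning_tree V E T" "f_MST V E w = sum w T"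
    using f_MST_attained[OF assms(1,2)] .
  have "T \<subseteq> E" "e \<notin> T" using T(1) assms(4) by (auto simp: spanning_tree_def)
  then have "f_MST V (insert e E) (w(e := x)) \<le> sum (w(e := x)) T"
    using T(1) assms by (intro f_MST_le_connected) (auto simp: spanning_tree_def)
  also have "\<dots> = f_MST V E w" using \<open>e \<notin> T\<close> T(2) by (auto intro: sum.cong)
  finally show ?thesis .
qed

section \<open>Cheapest edges across a cut\<close>

lemma w1_le:
  assumes "finite E" "{c, d} \<in> E" "c \<in> S" "d \<in> V - S"
  shows "w1 V E w S \<le> w {c, d}"
  unfolding w1_def using assms by (intro Min_le) auto

lemma w1_attained:
  assumes "simple_graph V E" "connected_on V E" "u \<in> S" "u \<in> V" "v \<in> V - S"
  obtains c d where "{c, d} \<in> E" "c \<in> S" "d \<in> V - S" "w1 V E w S = w {c, d}"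
proof -
  let ?C = "{e \<in> E. \<exists>c\<in>S. \<exists>d\<in>V - S. e = {c, d}}"
  have finE: "finite E" using assms(1) by (rule simple_graph_finite_edges)
  have "(u, v) \<in> (adj_rel E)\<^sup>*" using assms(2,4,5) unfolding connected_on_def by blast
  then obtain c d where cd: "(c, d) \<in> adj_rel E" "c \<in> S" "d \<notin> S"
    using assms(3,5) by (elim rtrancl_leaves_set) auto
  then have "{c, d} \<in> E" by (simp add: adj_rel_def)
  moreover from this have "d \<in> V" using assms(1) by (auto simp: simple_graph_def pairs_def)
  ultimately have "?C \<noteq> {}" using cd by blast
  then have "w1 V E w S \<in> w ` ?C" unfolding w1_def using finE by (intro Min_in) auto
  then show ?thesis using that by blast
qed

lemma w1_nonneg:
  assumes "simple_graph V E" "connected_on V E" "\<forall>e\<in>E. 0 \<le> w e" "u \<in> S" "u \<in> V" "v \<in> V - S"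
  shows "0 \<le> w1 V E w S"
proof -
  obtain c d where "{c, d} \<in> E" "w1 V E w S = w {c, d}"
    using w1_attained[OF assms(1,2,4-6)] .
  with assms(3) show ?thesis by simp
qed

section \<open>Bounds on the change of the MST weight\<close>

lemma pairs_iff: "e \<in> pairs V \<longleftrightarrow> (\<exists>u v. e = {u, v} \<and> u \<noteq> v \<and> u \<in> V \<and> v \<in> V)"
  by (auto simp: pairs_def card_2_iff)

lemma f_MST_le_reconnect_across_cut:
  assumes G: "simple_graph V E" "connected_on V E" "\<forall>e\<in>E. 0 \<le> w e"
    and T: "spanning_tree V (insert {u, v} E) T" "{u, v} \<in> T"
    and uv: "u \<noteq> v" "u \<in> V" "v \<in> V"
  obtains S where "S \<subset> V" "u \<in> S" "v \<in> V - S"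
    "f_MST V E w \<le> sum w (T - {{u, v}}) + w1 V E w S"
proof -
  let ?R = "adj_rel (T - {{u, v}})"
  have "(u, v) \<notin> ?R\<^sup>*" using T uv(1) by (auto simp: spanning_tree_def acyclic_edges_def)
  define S where "S = {y \<in> V. (u, y) \<in> ?R\<^sup>*}"
  have S: "S \<subset> V" "u \<in> S" "v \<in> V - S"
    using uv \<open>(u, v) \<notin> ?R\<^sup>*\<close> by (auto simp: S_def)
  obtain c d where cd: "{c, d} \<in> E" "c \<in> S" "d \<in> V - S" "w1 V E w S = w {c, d}"
    using w1_attained[OF G(1,2) S(2) uv(2) S(3)] .
  have "(u, d) \<in> (adj_rel T)\<^sup>*"
    using T(1) uv(2) cd(3) by (auto simp: spanning_tree_def connected_on_def)
  moreover have "(u, d) \<notin> ?R\<^sup>*" using cd(3) by (simp add: S_def)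
  ultimately have "(v, d) \<in> ?R\<^sup>*" using adj_rel_rtrancl_Diff_edge[of u d T u v] by auto
  define T' where "T' = insert {c, d} (T - {{u, v}})"
  have sub: "T - {{u, v}} \<subseteq> T'" by (auto simp: T'_def)
  have "(u, c) \<in> (adj_rel T')\<^sup>*" using cd(2) adj_rel_rtrancl_mono[OF sub] by (simp add: S_def)
  moreover have "(c, d) \<in> adj_rel T'" using cd(2,3) by (auto simp: T'_def adj_rel_def)
  moreover have "(d, v) \<in> (adj_rel T')\<^sup>*"
    using \<open>(v, d) \<in> ?R\<^sup>*\<close> by (metis adj_rel_rtrancl_sym adj_rel_rtrancl_mono[OF sub])
  ultimately have "(u, v) \<in> (adj_rel T')\<^sup>*" by (metis rtrancl_trans r_into_rtrancl)
  moreover have "T' \<subseteq> E" using T(1) cd(1) by (auto simp: T'_def spanning_tree_def)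
  moreover have "finite E" using G(1) by (rule simple_graph_finite_edges)
  ultimately have "f_MST V E w \<le> sum w (T - {{u, v}}) + w {c, d}"
    using T(1) G(3) unfolding T'_def by (intro f_MST_le_exchange) (auto simp: spanning_tree_def)
  with S cd(4) that show ?thesis by simp
qed

lemma f_MST_decrease_le_w1:
  assumes G: "simple_graph V E" "connected_on V E" "\<forall>e\<in>E. 0 \<le> w e"
    and uv: "u \<noteq> v" "u \<in> V" "v \<in> V" "{u, v} \<notin> E" and "0 \<le> x"
  obtains S where "S \<subset> V" "u \<in> S" "v \<in> V - S"
    "f_MST V E w \<le> f_MST V (insert {u, v} E) (w({u, v} := x)) + w1 V E w S"
proof -
  define e where "e = {u, v}"
  define w' where "w' = w(e := x)"
  have finE: "finite E" using G(1) by (rule simple_graph_finite_edges)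
  have "connected_on V (insert e E)" using G(2) by (rule connected_on_mono) blast
  then obtain T where T: "spanning_tree V (insert e E) T" "f_MST V (insert e E) w' = sum w' T"
    using f_MST_attained finE by blast
  have TeE: "T \<subseteq> insert e E" using T(1) by (simp add: spanning_tree_def)
  show ?thesis
  proof (cases "e \<in> T")
    case False
    with TeE have "f_MST V E w \<le> sum w T"
      using T(1) by (intro f_MST_le_connected[OF finE G(3)]) (auto simp: spanning_tree_def)
    also have "\<dots> = f_MST V (insert e E) w'" using False T(2) by (auto simp: w'_def intro: sum.cong)
    also have "\<dots> \<le> f_MST V (insert e E) w' + w1 V E w {u}"
      using w1_nonneg[OF G, of u "{u}" v] uv by auto
    finally show ?thesis using that[of "{u}"] uv by (auto simp: e_def w'_def)
  next
    case True
    obtain S where S: "S \<subset> V" "u \<in> S" "v \<in> V - S"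
      and le: "f_MST V E w \<le> sum w (T - {e}) + w1 V E w S"
      using f_MST_le_reconnect_across_cut[OF G T(1)[unfolded e_def] True[unfolded e_def] uv(1-3)]
      unfolding e_def .
    have "sum w (T - {e}) = sum w' (T - {e})" by (auto simp: w'_def intro: sum.cong)
    also have "\<dots> = sum w' T - x"
      using True finite_subset[OF TeE] finE by (simp add: sum_diff1 w'_def del: fun_upd_apply) simp
    finally have "f_MST V E w \<le> f_MST V (insert e E) w' + w1 V E w S"
      using le T(2) \<open>0 \<le> x\<close> by linarith
    then show ?thesis using that[OF S] by (simp add: e_def w'_def)
  qed
qed

lemma w1_le_f_MST_decrease:
  assumes G: "simple_graph V E" "connected_on V E" "\<forall>e\<in>E. 0 \<le> w e"
    and S: "S \<subseteq> V" "u \<in> S" "v \<in> V - S" "{u, v} \<notin> E"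
  shows "f_MST V (insert {u, v} E) (w({u, v} := 0)) + w1 V E w S \<le> f_MST V E w"
proof -
  define e where "e = {u, v}"
  define w' where "w' = w(e := 0)"
  have finE: "finite E" using G(1) by (rule simple_graph_finite_edges)
  obtain T where T: "spanning_tree V E T" "f_MST V E w = sum w T"
    using f_MST_attained finE G(2) by blast
  have TE: "T \<subseteq> E" and "connected_on V T" using T(1) by (auto simp: spanning_tree_def)
  then have "(u, v) \<in> (adj_rel T)\<^sup>*" using S unfolding connected_on_def by blast
  from crossing_edge_replaceable[OF finite_subset[OF TE finE] this S(2)] S(3)
  obtain c d where cd: "{c, d} \<in> T" "c \<in> S" "d \<notin> S"
      "(c, d) \<in> (adj_rel (insert e (T - {{c, d}})))\<^sup>*"
    unfolding e_def by blast
  have "d \<in> V" using cd(1) TE G(1) by (auto simp: simple_graph_def pairs_def)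
  have "e \<notin> T" using TE S(4) by (auto simp: e_def)
  have "f_MST V (insert e E) w' \<le> sum w' (T - {{c, d}}) + w' e"
    using G(3) TE cd(4) \<open>connected_on V T\<close> finE
    by (intro f_MST_le_exchange) (auto simp: w'_def)
  also have "\<dots> = sum w (T - {{c, d}})"
    using \<open>e \<notin> T\<close> by (simp add: w'_def) (rule sum.cong, auto)
  also have "\<dots> = sum w T - w {c, d}" using cd(1) finite_subset[OF TE finE] by (simp add: sum_diff1)
  finally have "f_MST V (insert e E) w' \<le> f_MST V E w - w {c, d}" using T(2) by simp
  moreover have "w1 V E w S \<le> w {c, d}"
    using cd(1-3) \<open>d \<in> V\<close> TE finE by (intro w1_le) auto
  ultimately show ?thesis by (simp add: e_def w'_def)
qed

definition nonedge_cuts :: "'a set \<Rightarrow> 'a set set \<Rightarrow> 'a set set" where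
  "nonedge_cuts V E = {S. S \<subset> V \<and> (\<exists>u\<in>S. \<exists>v\<in>V - S. {u, v} \<notin> E)}"

lemma finite_nonedge_cuts: "finite V \<Longrightarrow> finite (nonedge_cuts V E)"
  by (rule finite_subset[of _ "Pow V"]) (auto simp: nonedge_cuts_def)

lemma f_MST_change_le_w1:
  assumes G: "simple_graph V E" "connected_on V E" "\<forall>e\<in>E. 0 \<le> w e"
    and "e \<in> pairs V - E" "0 \<le> x"
  obtains S where "S \<in> nonedge_cuts V E"
    "\<bar>f_MST V E w - f_MST V (insert e E) (w(e := x))\<bar> \<le> w1 V E w S"
proof -
  obtain u v where uv: "e = {u, v}" "u \<noteq> v" "u \<in> V" "v \<in> V" "{u, v} \<notin> E"
    using assms(4) by (auto simp: pairs_iff)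
  obtain S where S: "S \<subset> V" "u \<in> S" "v \<in> V - S"
    and "f_MST V E w \<le> f_MST V (insert e E) (w(e := x)) + w1 V E w S"
    using f_MST_decrease_le_w1[OF G uv(2-5) assms(5)] unfolding uv(1) .
  moreover have "f_MST V (insert e E) (w(e := x)) \<le> f_MST V E w"
    using simple_graph_finite_edges assms by (intro f_MST_insert_le) auto
  moreover have "S \<in> nonedge_cuts V E" using S uv(5) by (auto simp: nonedge_cuts_def)
  ultimately show ?thesis using that by simp
qed

lemma w1_le_f_MST_change:
  assumes G: "simple_graph V E" "connected_on V E" "\<forall>e\<in>E. 0 \<le> w e"
    and "S \<in> nonedge_cuts V E"
  obtains e where "e \<in> pairs V - E"
    "w1 V E w S \<le> \<bar>f_MST V E w - f_MST V (insert e E) (w(e := 0))\<bar>"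
proof -
  obtain u v where S: "S \<subset> V" "u \<in> S" "v \<in> V - S" "{u, v} \<notin> E"
    using assms(4) by (auto simp: nonedge_cuts_def)
  then have "{u, v} \<in> pairs V - E" by (auto simp: pairs_iff)
  moreover have "w1 V E w S \<le> \<bar>f_MST V E w - f_MST V (insert {u, v} E) (w({u, v} := 0))\<bar>"
    using w1_le_f_MST_decrease[OF G, of S u v] S by auto
  ultimately show ?thesis using that by blast
qed

lemma Sup_eq_if_cofinal:
  fixes A B :: "'a::conditionally_complete_lattice set"
  assumes "bdd_above B" "\<And>a. a \<in> A \<Longrightarrow> \<exists>b\<in>B. a \<le> b" "\<And>b. b \<in> B \<Longrightarrow> \<exists>a\<in>A. b \<le> a"
  shows "Sup A = Sup B"
proof (cases "B = {}")
  case False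
  then have "A \<noteq> {}" using assms(3) by blast
  have "bdd_above A" using assms(1,2) unfolding bdd_above_def by (meson order_trans)
  show ?thesis using assms False \<open>A \<noteq> {}\<close> \<open>bdd_above A\<close> by (intro antisym cSup_mono) auto
qed (use assms(2) in force)

theorem mainTheorem7:
  fixes V :: "'a set" and E :: "'a set set" and w :: "'a set \<Rightarrow> real"
  assumes "simple_graph V E"
    and "connected_on V E"
    and "\<forall>e\<in>E. w e \<ge> 0"
  shows "RS_MST V E w =
         Sup (w1 V E w ` {S. S \<subset> V \<and> (\<exists>u\<in>S. \<exists>v\<in>V - S. {u, v} \<notin> E)})"
proof -
  let ?change = "\<lambda>e x. \<bar>f_MST V E w - f_MST V (insert e E) (w(e := x))\<bar>"
  have "finite (nonedge_cuts V E)"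
    using assms(1) by (simp add: simple_graph_def finite_nonedge_cuts)
  show ?thesis
    unfolding RS_MST_def nonedge_cuts_def[symmetric]
  proof (rule Sup_eq_if_cofinal, goal_cases)
    case 1
    show ?case using \<open>finite (nonedge_cuts V E)\<close> by (intro bdd_above_finite) simp
  next
    case (2 l)
    then obtain e x where l: "l = ?change e x" and ex: "e \<in> pairs V - E" "0 \<le> x" by blast
    obtain S where "S \<in> nonedge_cuts V E" "?change e x \<le> w1 V E w S"
      using f_MST_change_le_w1[OF assms ex] .
    then show ?case unfolding l by blast
  next
    case (3 r)
    then obtain S where "S \<in> nonedge_cuts V E" "r = w1 V E w S" by blast
    then obtain e where "e \<in> pairs V - E" "r \<le> ?change e 0"
      using w1_le_f_MST_change[OF assms] by blast
    then show ?case by force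
  qed
qed

end
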